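(* Let $0<p<1$ and let $\mathcal O(D_p)$ be the universal complex $*$-algebra generated by one element $x$ subject to $x^*x-pxx^*=1-p$. Put $X:=1-xx^*$, and for $n\in\mathbb N$ write $x^{-n}:=(x^* )^n$. Then for every $\mu\in\mathbb Z$, $$x^\mu x^{-\mu}=1+\mathcal Q^p_\mu(X).$$
   Context: For real $r>0$ and $n\ge1$, $Q^r_n(Y)=\sum_{m=1}^n(-1)^m r^{-nm+\frac{m(m+1)}{2}}\binom{n}{m}_{r}Y^m$, where $[0]_r=0$, $[n]_r=1+r+\dots+r^{n-1}$, $[n]_r!=[1]_r\cdots[n]_r$, $[0]_r!=1$, $\binom{n}{m}_r=\frac{[n]_r!}{[m]_r![n-m]_r!}$. For $\mu\in\mathbb Z$ define $\mathcal Q^p_\mu(Y)=Q^p_\mu(Y)$ if $\mu>0$, $\mathcal Q^p_0=0$, and $\mathcal Q^p_\mu(Y)=Q^{p^{-1}}_{-\mu}(pY)$ if $\mu<0$. *)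

theory Defs
  imports Complex_Main
begin

definition qint :: "real \<Rightarrow> nat \<Rightarrow> real" where
  "qint r n = (\<Sum>i<n. r ^ i)"

definition qfact :: "real \<Rightarrow> nat \<Rightarrow> real" where
  "qfact r n = (\<Prod>k=1..n. qint r k)"

definition qbinom :: "real \<Rightarrow> nat \<Rightarrow> nat \<Rightarrow> real" where
  "qbinom r n m = qfact r n / (qfact r m * qfact r (n - m))"

definition Qcoeff :: "real \<Rightarrow> nat \<Rightarrow> nat \<Rightarrow> real" where
  "Qcoeff r n m = (-1) ^ m * r powi (- (int n * int m) + int (m * (m + 1) div 2)) * qbinom r n m"

locale complex_star_algebra =
  fixes smult :: "complex \<Rightarrow> 'a::ring_1 \<Rightarrow> 'a"
    and star :: "'a \<Rightarrow> 'a"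
  assumes smult_add_right: "smult c (a + b) = smult c a + smult c b"
    and smult_add_left: "smult (c + d) a = smult c a + smult d a"
    and smult_smult: "smult c (smult d a) = smult (c * d) a"
    and smult_one: "smult 1 a = a"
    and smult_mult_left: "smult c a * b = smult c (a * b)"
    and smult_mult_right: "a * smult c b = smult c (a * b)"
    and star_add: "star (a + b) = star a + star b"
    and star_smult: "star (smult c a) = smult (cnj c) (star a)"
    and star_mult: "star (a * b) = star b * star a"
    and star_star: "star (star a) = a"

definition Q_eval :: "(complex \<Rightarrow> 'a::ring_1 \<Rightarrow> 'a) \<Rightarrow> real \<Rightarrow> nat \<Rightarrow> 'a \<Rightarrow> 'a" where
  "Q_eval smult r n Y = (\<Sum>m=1..n. smult (complex_of_real (Qcoeff r n m)) (Y ^ m))"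

definition Qcal_eval :: "(complex \<Rightarrow> 'a::ring_1 \<Rightarrow> 'a) \<Rightarrow> real \<Rightarrow> int \<Rightarrow> 'a \<Rightarrow> 'a" where
  "Qcal_eval smult p \<mu> Y =
     (if \<mu> > 0 then Q_eval smult p (nat \<mu>) Y
      else if \<mu> = 0 then 0
      else Q_eval smult (inverse p) (nat (- \<mu>)) (smult (complex_of_real p) Y))"

definition xpow :: "('a::ring_1 \<Rightarrow> 'a) \<Rightarrow> 'a \<Rightarrow> int \<Rightarrow> 'a" where
  "xpow star x \<mu> = (if \<mu> \<ge> 0 then x ^ nat \<mu> else (star x) ^ nat (- \<mu>))"

end

theory Submission
  imports Defs
begin

text \<open>Write \<open>P\<^sub>n = 1 + Q\<^sup>r\<^sub>n\<close>. If \<open>a Z = r\<^sup>-\<^sup>1 Z a\<close> and \<open>a b = 1 - Z\<close>, then moving \<open>a\<close> across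
  a polynomial in \<open>Z\<close> rescales its argument, so \<open>a\<^sup>n\<^sup>+\<^sup>1 b\<^sup>n\<^sup>+\<^sup>1 = a P\<^sub>n(Z) b = P\<^sub>n(Z/r) (1 - Z)\<close>;
  the coefficients of \<open>Q\<^sup>r\<^sub>n\<close> satisfy exactly this recursion (a form of q-Pascal's rule), so
  \<open>a\<^sup>n b\<^sup>n = P\<^sub>n(Z)\<close>. In the quantum disc, \<open>(a, b, Z, r) = (x, x\<^sup>*, X, p)\<close> handles \<open>\<mu> > 0\<close> and
  \<open>(a, b, Z, r) = (x\<^sup>*, x, pX, p\<^sup>-\<^sup>1)\<close> handles \<open>\<mu> < 0\<close>.\<close>

lemma qint_add: "qint r (a + b) = qint r a + r ^ a * qint r b"
  by (induction b) (simp_all add: qint_def power_add algebra_simps)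

lemma qint_pos: "r > 0 \<Longrightarrow> n \<ge> 1 \<Longrightarrow> qint r n > 0"
  unfolding qint_def by (rule sum_pos) (auto simp: lessThan_empty_iff)

lemma qfact_0 [simp]: "qfact r 0 = 1"
  by (simp add: qfact_def)

lemma qfact_Suc: "qfact r (Suc n) = qfact r n * qint r (Suc n)"
  by (simp add: qfact_def)

lemma qfact_pos: "r > 0 \<Longrightarrow> qfact r n > 0"
  by (induction n) (simp_all add: qfact_Suc qint_pos)

lemma qbinom_0 [simp]: "r > 0 \<Longrightarrow> qbinom r n 0 = 1"
  using qfact_pos[of r n] by (simp add: qbinom_def)

lemma qbinom_self [simp]: "r > 0 \<Longrightarrow> qbinom r n n = 1"
  using qfact_pos[of r n] by (simp add: qbinom_def)

lemma qbinom_Suc_Suc: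
  assumes r: "r > 0" and j: "j < n"
  shows "qbinom r (Suc n) (Suc j) = qbinom r n (Suc j) + r ^ (n - j) * qbinom r n j"
proof -
  obtain k where n: "n = Suc j + k"
    using j less_iff_Suc_add by auto
  have qint_split: "qint r (Suc n) = qint r (Suc k) + r ^ Suc k * qint r (Suc j)"
    using qint_add[of r "Suc k" "Suc j"] n by (simp add: add.commute)
  have "qint r (Suc j) > 0" "qint r (Suc k) > 0" "qfact r j > 0" "qfact r k > 0" "qfact r n > 0"
    using qint_pos qfact_pos r by auto
  moreover have "Suc n - Suc j = Suc k" "n - Suc j = k" "n - j = Suc k"
    using n by auto
  ultimately show ?thesis
    unfolding qbinom_def \<open>Suc n - Suc j = Suc k\<close> \<open>n - Suc j = k\<close> \<open>n - j = Suc k\<close>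
      qfact_Suc[of r n] qfact_Suc[of r j] qfact_Suc[of r k] qint_split
    by (simp add: field_simps)
qed

lemma Qcoeff_0 [simp]: "r > 0 \<Longrightarrow> Qcoeff r n 0 = 1"
  by (simp add: Qcoeff_def)

lemma triangular_Suc: "int (Suc j * (Suc j + 1) div 2) = int (j * (j + 1) div 2) + int (Suc j)"
proof -
  have "Suc j * (Suc j + 1) = j * (j + 1) + 2 * Suc j"
    by simp
  then show ?thesis
    by simp
qed

lemma Qcoeff_mult_inverse_power:
  assumes "r \<noteq> 0"
  shows "Qcoeff r n m * inverse r ^ m
           = (-1) ^ m * r powi (- (int (Suc n) * int m) + int (m * (m + 1) div 2)) * qbinom r n m"
proof -
  have "inverse r ^ m = r powi (- int m)"
    by (simp add: power_int_minus power_inverse)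
  moreover have "r powi a * r powi b = r powi (a + b)" for a b
    using assms by (simp add: power_int_add)
  ultimately show ?thesis
    unfolding Qcoeff_def by (simp add: algebra_simps)
qed

text \<open>The coefficient form of \<open>P\<^sub>n\<^sub>+\<^sub>1(Y) = P\<^sub>n(Y/r) (1 - Y)\<close>, where \<open>P\<^sub>n = 1 + Q\<^sup>r\<^sub>n\<close>.\<close>

lemma Qcoeff_Suc:
  assumes r: "r > 0" and m: "m \<le> Suc n"
  shows "Qcoeff r (Suc n) m = (if m \<le> n then Qcoeff r n m * inverse r ^ m else 0)
           - (if m = 0 then 0 else Qcoeff r n (m - 1) * inverse r ^ (m - 1))"
proof (cases m)
  case 0
  with r show ?thesis
    by simp
next
  case (Suc j)
  define E where "E = - (int (Suc n) * int m) + int (m * (m + 1) div 2)"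
  have jn: "j \<le> n"
    using m Suc by simp
  have pascal: "qbinom r (Suc n) m = (if m \<le> n then qbinom r n m else 0) + r ^ (n - j) * qbinom r n j"
    using Suc jn qbinom_Suc_Suc[OF r, of j n] r by (cases "j = n") auto
  have "- (int (Suc n) * int j) + int (j * (j + 1) div 2) = E + int (n - j)"
    using Suc jn triangular_Suc[of j] by (simp add: E_def algebra_simps of_nat_diff)
  then have "r powi (- (int (Suc n) * int j) + int (j * (j + 1) div 2)) = r powi E * r ^ (n - j)"
    using r by (simp add: power_int_add)
  then have shifted: "Qcoeff r n (m - 1) * inverse r ^ (m - 1) = - ((-1) ^ m * r powi E * r ^ (n - j) * qbinom r n j)"
    using Qcoeff_mult_inverse_power[of r n j] r Suc by simp
  have "Qcoeff r (Suc n) m = (-1) ^ m * r powi E * qbinom r (Suc n) m"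
    by (simp add: Qcoeff_def E_def)
  also have "\<dots> = (if m \<le> n then Qcoeff r n m * inverse r ^ m else 0)
                   + (-1) ^ m * r powi E * r ^ (n - j) * qbinom r n j"
    unfolding pascal using Qcoeff_mult_inverse_power[of r n m] r by (simp add: E_def algebra_simps)
  finally show ?thesis
    using shifted Suc by simp
qed

locale complex_algebra =
  fixes smult :: "complex \<Rightarrow> 'a::ring_1 \<Rightarrow> 'a"
  assumes smult_add_right: "smult c (a + b) = smult c a + smult c b"
    and smult_add_left: "smult (c + d) a = smult c a + smult d a"
    and smult_smult: "smult c (smult d a) = smult (c * d) a"
    and smult_one: "smult 1 a = a"
    and smult_mult_left: "smult c a * b = smult c (a * b)"
    and smult_mult_right: "a * smult c b = smult c (a * b)"
begin

abbreviation rsmult :: "real \<Rightarrow> 'a \<Rightarrow> 'a" where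
  "rsmult c a \<equiv> smult (complex_of_real c) a"

lemma smult_zero_left [simp]: "smult 0 a = 0"
  using smult_add_left[of 0 0 a] by simp

lemma smult_diff_left: "smult (c - d) a = smult c a - smult d a"
  using smult_add_left[of "c - d" d a] by (simp add: algebra_simps)

lemma smult_diff_right: "smult c (a - b) = smult c a - smult c b"
  using smult_add_right[of c "a - b" b] by (simp add: algebra_simps)

lemma one_plus_Q_eval:
  assumes "r > 0"
  shows "1 + Q_eval smult r n Z = (\<Sum>m\<le>n. rsmult (Qcoeff r n m) (Z ^ m))"
  unfolding Q_eval_def atMost_atLeast0 using assms
  by (simp add: sum.atLeast_Suc_atMost smult_one)

lemma sum_powers_mult_one_minus:
  "(\<Sum>m\<le>N. rsmult (c m) (Z ^ m)) * (1 - Z)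
     = (\<Sum>m\<le>Suc N. rsmult ((if m \<le> N then c m else 0) - (if m = 0 then 0 else c (m - 1))) (Z ^ m))"
proof -
  have "(\<Sum>m\<le>N. rsmult (c m) (Z ^ m)) * (1 - Z)
      = (\<Sum>m\<le>N. rsmult (c m) (Z ^ m)) - (\<Sum>m\<le>N. rsmult (c m) (Z ^ Suc m))"
    by (simp add: right_diff_distrib sum_distrib_right smult_mult_left power_commutes)
  moreover have "(\<Sum>m\<le>N. rsmult (c m) (Z ^ m)) = (\<Sum>m\<le>Suc N. rsmult (if m \<le> N then c m else 0) (Z ^ m))"
    by (simp add: sum.atMost_Suc)
  moreover have "(\<Sum>m\<le>N. rsmult (c m) (Z ^ Suc m))
                   = (\<Sum>m\<le>Suc N. rsmult (if m = 0 then 0 else c (m - 1)) (Z ^ m))"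
    unfolding sum.atMost_Suc_shift[of _ N] by simp
  ultimately show ?thesis
    by (simp only: of_real_diff smult_diff_left sum_subtractf)
qed

lemma mult_powers_commute_smult:
  assumes "a * Z = smult c (Z * a)"
  shows "a * Z ^ k = smult (c ^ k) (Z ^ k * a)"
proof (induction k)
  case 0
  then show ?case
    by (simp add: smult_one)
next
  case (Suc k)
  have "a * Z ^ Suc k = smult c (Z * (a * Z ^ k))"
    by (simp add: assms smult_mult_left mult.assoc flip: mult.assoc[of a Z])
  also have "\<dots> = smult (c ^ Suc k) (Z ^ Suc k * a)"
    by (simp add: Suc smult_mult_right smult_smult mult.assoc mult.commute)
  finally show ?case .
qed

lemma power_mult_power_eq_Q_eval:
  assumes r: "r > 0"
    and commute: "a * Z = rsmult (inverse r) (Z * a)"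
    and factor: "a * b = 1 - Z"
  shows "a ^ n * b ^ n = 1 + Q_eval smult r n Z"
proof -
  have conj: "a * rsmult c (Z ^ m) * b = rsmult (c * inverse r ^ m) (Z ^ m) * (1 - Z)" for c m
    using mult_powers_commute_smult[OF commute, of m]
    by (simp add: smult_mult_left smult_mult_right smult_smult mult.assoc factor flip: factor)
  have "a ^ n * b ^ n = (\<Sum>m\<le>n. rsmult (Qcoeff r n m) (Z ^ m))"
  proof (induction n)
    case 0
    then show ?case
      using r by (simp add: smult_one)
  next
    case (Suc n)
    have "a ^ Suc n * b ^ Suc n = a * (a ^ n * b ^ n) * b"
      by (simp only: power_Suc[of a] power_Suc2[of b] mult.assoc)
    also have "\<dots> = (\<Sum>m\<le>n. rsmult (Qcoeff r n m * inverse r ^ m) (Z ^ m)) * (1 - Z)"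
      unfolding Suc by (simp add: sum_distrib_left sum_distrib_right conj)
    also have "\<dots> = (\<Sum>m\<le>Suc n. rsmult (Qcoeff r (Suc n) m) (Z ^ m))"
      unfolding sum_powers_mult_one_minus by (rule sum.cong) (simp_all add: Qcoeff_Suc[OF r])
    finally show ?case .
  qed
  then show ?thesis
    using one_plus_Q_eval[OF r] by simp
qed

lemma quantum_disc_relations:
  fixes x y :: 'a
  defines "X \<equiv> 1 - x * y"
  assumes p: "p \<noteq> 0"
    and rel: "y * x - rsmult p (x * y) = rsmult (1 - p) 1"
  shows "y * x = 1 - rsmult p X"
    and "x * X = rsmult (inverse p) (X * x)"
    and "y * rsmult p X = rsmult p (rsmult p X * y)"
proof -
  show yx: "y * x = 1 - rsmult p X"
    using rel by (simp add: X_def smult_diff_right smult_diff_left smult_one algebra_simps)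
  have "X * x = x * (1 - y * x)"
    by (simp add: X_def algebra_simps)
  then have "X * x = rsmult p (x * X)"
    by (simp add: yx smult_mult_right)
  then have "rsmult (inverse p) (X * x) = rsmult (inverse p * p) (x * X)"
    by (simp add: smult_smult)
  then show "x * X = rsmult (inverse p) (X * x)"
    using p by (simp add: smult_one)
  have "y * X = (1 - y * x) * y"
    by (simp add: X_def algebra_simps)
  then show "y * rsmult p X = rsmult p (rsmult p X * y)"
    by (simp add: yx smult_mult_left smult_mult_right)
qed

end

theorem mainTheorem5:
  fixes smult :: "complex \<Rightarrow> 'a::ring_1 \<Rightarrow> 'a"
    and star :: "'a \<Rightarrow> 'a"
    and x :: 'a
    and p :: real
    and \<mu> :: int
  assumes alg: "complex_star_algebra smult star"
    and p_pos: "0 < p" and p_lt1: "p < 1"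
    and rel: "star x * x - smult (complex_of_real p) (x * star x) = smult (complex_of_real (1 - p)) 1"
  shows "xpow star x \<mu> * xpow star x (- \<mu>)
           = 1 + Qcal_eval smult p \<mu> (1 - x * star x)"
proof -
  interpret complex_algebra smult
    using alg unfolding complex_star_algebra_def complex_algebra_def by simp
  define X where "X = 1 - x * star x"
  note disc = quantum_disc_relations[OF _ rel, folded X_def]
  consider "\<mu> > 0" | "\<mu> = 0" | "\<mu> < 0"
    by linarith
  then show ?thesis
  proof cases
    case 1
    have "x ^ nat \<mu> * star x ^ nat \<mu> = 1 + Q_eval smult p (nat \<mu>) X"
      using p_pos disc(2) by (intro power_mult_power_eq_Q_eval) (simp_all add: X_def)
    with 1 show ?thesis
      by (simp add: xpow_def Qcal_eval_def X_def)
  next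
    case 2
    then show ?thesis
      by (simp add: xpow_def Qcal_eval_def)
  next
    case 3
    have "star x ^ nat (- \<mu>) * x ^ nat (- \<mu>) = 1 + Q_eval smult (inverse p) (nat (- \<mu>)) (rsmult p X)"
      using p_pos disc(1,3) by (intro power_mult_power_eq_Q_eval) simp_all
    with 3 show ?thesis
      by (simp add: xpow_def Qcal_eval_def X_def)
  qed
qed

end
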